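(* Let $v^{(1)},\dots,v^{(p)}\in\mathbb{R}^n$ (all entries finite) and let $V$ be the $n\times p$ matrix with columns $v^{(k)}$. Then the operator $T:\mathbb{R}^n\to\mathbb{R}^n$, $$T_i(x)=\min_{k\in[p]}\Big[-V_{ik}+\max_{j\in[n],\,j\neq i}(V_{jk}+x_j)\Big],\qquad i\in[n],$$ has a finite eigenvector, i.e., there exist $a\in\mathbb{R}^n$ and $\lambda\in\mathbb{R}$ such that $T(a)=\lambda+a$ (and then $\lambda=\rho(T)$).
   Context: $\lambda+a$ denotes $(\lambda+a_i)_i$. $\rho(T)=\sup\{\lambda\in\mathbb{R}\cup\{-\infty\}:\exists u\in(\mathbb{R}\cup\{-\infty\})^n,\ u\not\equiv-\infty,\ T(u)=\lambda+u\}$ for $T$ extended to $(\mathbb{R}\cup\{-\infty\})^n$ by the same formula. Here $n\ge2$ is implicit. *)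

theory Defs
  imports "HOL-Analysis.Analysis" "HOL-Library.Extended_Real"
begin

definition minmax_op :: "real^'p^'n \<Rightarrow> real^'n \<Rightarrow> real^'n" where
  "minmax_op V x = (\<chi> i. Min ((\<lambda>k. - V$i$k + Max ((\<lambda>j. V$j$k + x$j) ` {j. j \<noteq> i})) ` UNIV))"

text \<open>The same formula on (R \<union> {-\<infinity>})^n, represented by ereal vectors with no +\<infinity> entries.\<close>
definition minmax_op_ext :: "real^'p^'n \<Rightarrow> ereal^'n \<Rightarrow> ereal^'n" where
  "minmax_op_ext V u = (\<chi> i. Min ((\<lambda>k. ereal (- V$i$k) + Max ((\<lambda>j. ereal (V$j$k) + u$j) ` {j. j \<noteq> i})) ` UNIV))"

definition spectral_rho :: "real^'p^'n \<Rightarrow> ereal" where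
  "spectral_rho V = Sup {l. l \<noteq> \<infinity> \<and> (\<exists>u::ereal^'n. (\<forall>i. u$i \<noteq> \<infinity>) \<and> (\<exists>i. u$i \<noteq> -\<infinity>)
       \<and> minmax_op_ext V u = (\<chi> i. l + u$i))}"

end

theory Submission
  imports Defs
begin

(* T is monotone and commutes with adding constants. Hence if T(a) = l + a with a finite and
   T(u) = mu + u with u having entries in R or -oo, not all -oo, then shifting a by a constant
   until it dominates u and touches it in one coordinate gives mu <= l; so a finite eigenvalue
   is rho(T).

   A finite eigenvector exists: for n = 2 each T_i(x) is T_i(0) plus the other coordinate, and
   a = T(0)/2 works. For n >= 3 and |V_ik| <= W, T_i(x) lies within 2W of
   M_i(x) = max_{j<>i} x_j. For i <> j one of M_i(x), M_j(x) is max x, and if any two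
   coordinates of x sum to at least 2 max x - 16W then every M_i(x) is at least max x - 8W;
   hence T(x) has this property again. On the hyperplane of coordinate sum 0 these vectors form
   a compact convex set, mapped into itself by T followed by recentering, and Brouwer's fixed
   point theorem yields the eigenvector. *)

lemma others_nonempty:
  assumes "CARD('n::finite) \<ge> 2"
  shows "{j::'n. j \<noteq> i} \<noteq> {}"
proof
  assume "{j::'n. j \<noteq> i} = {}"
  then have "(UNIV::'n set) = {i}" by auto
  then have "CARD('n) = card {i}" by (simp only:)
  then show False using assms by simp
qed

lemma exists_two_others:
  fixes i :: "'n::finite"
  assumes "CARD('n) \<ge> 3"
  obtains s t :: 'n where "s \<noteq> t" "s \<noteq> i" "t \<noteq> i"
proof -
  have "\<not> card (UNIV - {i}) \<le> Suc 0" using assms by (simp add: card_Diff_singleton)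
  then obtain s t where "s \<in> UNIV - {i}" "t \<in> UNIV - {i}" "s \<noteq> t"
    by (meson card_le_Suc0_iff_eq finite)
  then show ?thesis using that by blast
qed

lemma card2_other:
  fixes i :: "'n::finite"
  assumes "CARD('n) = 2"
  obtains j where "j \<noteq> i" "(UNIV::'n set) = {i, j}"
proof -
  obtain p q :: 'n where "UNIV = {p, q}" "p \<noteq> q"
    using assms card_2_iff[of "UNIV::'n set"] by blast
  then show ?thesis using that[of q] that[of p] by (cases "i = p") (auto simp: insert_commute)
qed

lemma Max_image_mono:
  fixes f g :: "'a \<Rightarrow> 'b::linorder"
  assumes "finite A" "A \<noteq> {}" "\<And>a. a \<in> A \<Longrightarrow> f a \<le> g a"
  shows "Max (f ` A) \<le> Max (g ` A)"
  using assms by (auto simp: Max_le_iff) (meson Max_ge finite_imageI imageI order_trans)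

lemma Min_image_mono:
  fixes f g :: "'a \<Rightarrow> 'b::linorder"
  assumes "finite A" "A \<noteq> {}" "\<And>a. a \<in> A \<Longrightarrow> f a \<le> g a"
  shows "Min (f ` A) \<le> Min (g ` A)"
  using assms by (auto simp: Min_ge_iff) (meson Min_le finite_imageI imageI order_trans)

lemma abs_Max_image_diff_le:
  fixes f g :: "'a \<Rightarrow> real"
  assumes "finite A" "A \<noteq> {}" "\<And>a. a \<in> A \<Longrightarrow> \<bar>f a - g a\<bar> \<le> e"
  shows "\<bar>Max (f ` A) - Max (g ` A)\<bar> \<le> e"
proof -
  have "Max (f ` A) \<le> Max ((\<lambda>a. g a + e) ` A)" "Max (g ` A) \<le> Max ((\<lambda>a. f a + e) ` A)"
    using assms by (intro Max_image_mono; force simp: abs_le_iff)+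
  then show ?thesis unfolding Max_add_commute[OF assms(1,2)] abs_le_iff by linarith
qed

lemma continuous_on_Max_image:
  fixes g :: "'a \<Rightarrow> 'b::topological_space \<Rightarrow> real"
  assumes "finite A" "A \<noteq> {}" "\<And>a. a \<in> A \<Longrightarrow> continuous_on S (g a)"
  shows "continuous_on S (\<lambda>x. Max ((\<lambda>a. g a x) ` A))"
  using assms
proof (induction A rule: finite_ne_induct)
  case (insert a F)
  then have "continuous_on S (\<lambda>x. max (g a x) (Max ((\<lambda>a. g a x) ` F)))"
    by (intro continuous_on_max) auto
  then show ?case using insert by simp
qed simp

lemma continuous_on_Min_image:
  fixes g :: "'a \<Rightarrow> 'b::topological_space \<Rightarrow> real"
  assumes "finite A" "A \<noteq> {}" "\<And>a. a \<in> A \<Longrightarrow> continuous_on S (g a)"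
  shows "continuous_on S (\<lambda>x. Min ((\<lambda>a. g a x) ` A))"
  using assms
proof (induction A rule: finite_ne_induct)
  case (insert a F)
  then have "continuous_on S (\<lambda>x. min (g a x) (Min ((\<lambda>a. g a x) ` F)))"
    by (intro continuous_on_min) auto
  then show ?case using insert by simp
qed simp

section \<open>A finite eigenvalue is the spectral radius\<close>

lemma minmax_op_add_const:
  fixes V :: "real^'p::finite^'n::finite"
  assumes "CARD('n) \<ge> 2"
  shows "minmax_op V (\<chi> j. x$j + c) = (\<chi> i. minmax_op V x $ i + c)"
proof -
  have "minmax_op V (\<chi> j. x$j + c) $ i = minmax_op V x $ i + c" for i
  proof -
    have inner: "Max ((\<lambda>j. V$j$k + (x$j + c)) ` {j. j \<noteq> i})
        = Max ((\<lambda>j. V$j$k + x$j) ` {j. j \<noteq> i}) + c" for k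
      using Max_add_commute[OF _ others_nonempty[OF assms], where f = "\<lambda>j. V$j$k + x$j" and k = c]
      by (simp add: add.assoc)
    have "minmax_op V (\<chi> j. x$j + c) $ i
        = Min ((\<lambda>k. (- V$i$k + Max ((\<lambda>j. V$j$k + x$j) ` {j. j \<noteq> i})) + c) ` UNIV)"
      unfolding minmax_op_def vec_lambda_beta inner by (simp add: algebra_simps)
    also have "\<dots> = minmax_op V x $ i + c"
      unfolding minmax_op_def by (subst Min_add_commute) auto
    finally show ?thesis .
  qed
  then show ?thesis by (simp add: vec_eq_iff)
qed

lemma minmax_op_ext_ereal:
  fixes V :: "real^'p::finite^'n::finite"
  assumes "CARD('n) \<ge> 2"
  shows "minmax_op_ext V (\<chi> i. ereal (x$i)) = (\<chi> i. ereal (minmax_op V x $ i))"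
proof -
  have mono_ereal: "mono ereal" by (simp add: mono_def)
  have "minmax_op_ext V (\<chi> i. ereal (x$i)) $ i = ereal (minmax_op V x $ i)" for i
  proof -
    have "Max ((\<lambda>j. ereal (V$j$k) + ereal (x$j)) ` {j. j \<noteq> i})
        = ereal (Max ((\<lambda>j. V$j$k + x$j) ` {j. j \<noteq> i}))" for k
      using mono_Max_commute[OF mono_ereal, of "(\<lambda>j. V$j$k + x$j) ` {j. j \<noteq> i}"]
        others_nonempty[OF assms]
      by (simp add: image_image)
    then show ?thesis
      unfolding minmax_op_ext_def minmax_op_def vec_lambda_beta
      using mono_Min_commute[OF mono_ereal,
          of "(\<lambda>k. - V$i$k + Max ((\<lambda>j. V$j$k + x$j) ` {j. j \<noteq> i})) ` UNIV"]
      by (simp add: image_image)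
  qed
  then show ?thesis by (simp add: vec_eq_iff)
qed

lemma mono_minmax_op_ext:
  fixes V :: "real^'p::finite^'n::finite"
  shows "mono (minmax_op_ext V)"
proof
  fix u w :: "ereal^'n"
  assume "u \<le> w"
  then have uw: "u$j \<le> w$j" for j by (simp add: less_eq_vec_def)
  have "Max ((\<lambda>j. ereal (V$j$k) + u$j) ` {j. j \<noteq> i})
      \<le> Max ((\<lambda>j. ereal (V$j$k) + w$j) ` {j. j \<noteq> i})" for i k
  proof (cases "{j. j \<noteq> i} = {}")
    case False
    then show ?thesis by (intro Max_image_mono add_left_mono uw) auto
  qed simp
  then have "minmax_op_ext V u $ i \<le> minmax_op_ext V w $ i" for i
    unfolding minmax_op_ext_def vec_lambda_beta by (intro Min_image_mono add_left_mono) auto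
  then show "minmax_op_ext V u \<le> minmax_op_ext V w" by (simp add: less_eq_vec_def)
qed

lemma ext_eigenvalue_le_eigenvalue:
  fixes V :: "real^'p::finite^'n::finite" and u :: "ereal^'n"
  assumes n2: "CARD('n) \<ge> 2"
    and eig: "minmax_op V a = (\<chi> i. l + a$i)"
    and u_fin: "\<And>i. u$i \<noteq> \<infinity>" and u_ne: "u$i0 \<noteq> -\<infinity>"
    and u_eig: "minmax_op_ext V u = (\<chi> i. \<mu> + u$i)"
  shows "\<mu> \<le> ereal l"
proof -
  define F where "F = {i. u$i \<noteq> -\<infinity>}"
  have real_u: "u$i = ereal (real_of_ereal (u$i))" if "i \<in> F" for i
    using that u_fin[of i] by (cases "u$i") (auto simp: F_def)
  define c where "c = Max ((\<lambda>i. real_of_ereal (u$i) - a$i) ` F)"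
  have "c \<in> (\<lambda>i. real_of_ereal (u$i) - a$i) ` F"
    unfolding c_def using u_ne by (intro Max_in) (auto simp: F_def)
  then obtain m where "m \<in> F" and um: "u$m = ereal (a$m + c)"
    using real_u by force
  define w where "w = (\<chi> i. ereal ((\<chi> j. a$j + c)$i))"
  have "u$i \<le> w$i" for i
  proof (cases "i \<in> F")
    case True
    then have "real_of_ereal (u$i) - a$i \<le> c" unfolding c_def by (intro Max_ge) auto
    then show ?thesis using real_u[OF True] unfolding w_def
      by (metis diff_le_eq ereal_less_eq(3) add.commute vec_lambda_beta)
  qed (simp add: F_def)
  then have "minmax_op_ext V u $ m \<le> minmax_op_ext V w $ m"
    using mono_minmax_op_ext[of V] by (simp add: mono_def less_eq_vec_def)
  also have "minmax_op_ext V w $ m = ereal (l + (a$m + c))"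
    unfolding w_def minmax_op_ext_ereal[OF n2] minmax_op_add_const[OF n2] eig by (simp add: add.assoc)
  finally have "\<mu> + ereal (a$m + c) \<le> ereal l + ereal (a$m + c)"
    using u_eig um by simp
  then show ?thesis by (cases \<mu>) auto
qed

lemma spectral_rho_eq_eigenvalue:
  fixes V :: "real^'p::finite^'n::finite"
  assumes n2: "CARD('n) \<ge> 2" and eig: "minmax_op V a = (\<chi> i. l + a$i)"
  shows "spectral_rho V = ereal l"
proof -
  let ?S = "{\<mu>. \<mu> \<noteq> \<infinity> \<and> (\<exists>u::ereal^'n. (\<forall>i. u$i \<noteq> \<infinity>) \<and> (\<exists>i. u$i \<noteq> -\<infinity>)
       \<and> minmax_op_ext V u = (\<chi> i. \<mu> + u$i))}"
  have "minmax_op_ext V (\<chi> i. ereal (a$i)) = (\<chi> i. ereal l + (\<chi> i. ereal (a$i))$i)"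
    unfolding minmax_op_ext_ereal[OF n2] eig by simp
  then have "ereal l \<in> ?S" by (intro CollectI conjI exI[of _ "\<chi> i. ereal (a$i)"]) auto
  moreover have "\<mu> \<le> ereal l" if "\<mu> \<in> ?S" for \<mu>
    using that ext_eigenvalue_le_eigenvalue[OF n2 eig] by blast
  ultimately show ?thesis
    unfolding spectral_rho_def by (intro antisym Sup_least Sup_upper)
qed

section \<open>Two coordinates\<close>

lemma minmax_op_single_other:
  fixes V :: "real^'p::finite^'n::finite"
  assumes "{k. k \<noteq> i} = {j}"
  shows "minmax_op V x $ i = minmax_op V 0 $ i + x$j"
proof -
  have "minmax_op V x $ i = Min ((\<lambda>k. (- V$i$k + V$j$k) + x$j) ` UNIV)"
    unfolding minmax_op_def vec_lambda_beta assms by (simp add: algebra_simps)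
  also have "\<dots> = Min ((\<lambda>k. - V$i$k + V$j$k) ` UNIV) + x$j"
    by (rule Min_add_commute) auto
  also have "Min ((\<lambda>k. - V$i$k + V$j$k) ` UNIV) = minmax_op V 0 $ i"
    unfolding minmax_op_def vec_lambda_beta assms by simp
  finally show ?thesis .
qed

lemma minmax_op_eigenvector_card2:
  fixes V :: "real^'p::finite^'n::finite"
  assumes n2: "CARD('n) = 2"
  shows "\<exists>a l. minmax_op V a = (\<chi> i. l + a$i)"
proof -
  define c where "c = minmax_op V 0"
  define l where "l = (\<Sum>j\<in>UNIV. c$j) / 2"
  have "minmax_op V (\<chi> i. c$i / 2) $ i = l + c$i / 2" for i
  proof -
    obtain j where "j \<noteq> i" and univ: "UNIV = {i, j}" using card2_other[OF n2] .
    then have "{k. k \<noteq> i} = {j}" by auto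
    then have "minmax_op V (\<chi> i. c$i / 2) $ i = c$i + c$j / 2"
      using minmax_op_single_other[of i j V "\<chi> i. c$i / 2"] by (simp add: c_def)
    moreover have "(\<Sum>j\<in>UNIV. c$j) = c$i + c$j" using \<open>j \<noteq> i\<close> by (subst univ) simp
    ultimately show ?thesis unfolding l_def by (simp add: field_simps)
  qed
  then have "minmax_op V (\<chi> i. c$i / 2) = (\<chi> i. l + (\<chi> i. c$i / 2)$i)"
    by (simp add: vec_eq_iff)
  then show ?thesis by blast
qed

section \<open>At least three coordinates\<close>

definition center :: "real^'n::finite \<Rightarrow> real^'n" where
  "center x = (\<chi> i. x$i - (\<Sum>j\<in>UNIV. x$j) / CARD('n))"

lemma sum_center: "(\<Sum>i\<in>UNIV. center x $ i) = 0"
  by (simp add: center_def sum_subtractf)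

lemma continuous_on_center: "continuous_on S center"
  unfolding center_def by (intro continuous_on_vec_lambda continuous_intros) auto

lemma eigenvector_if_center_invariant:
  fixes T :: "real^'n::finite \<Rightarrow> real^'n"
  assumes "compact K" "convex K" "K \<noteq> {}" "continuous_on K T"
    and center_T: "\<And>x. x \<in> K \<Longrightarrow> center (T x) \<in> K"
  shows "\<exists>a l. T a = (\<chi> i. l + a$i)"
proof -
  have "continuous_on K (center \<circ> T)"
    using assms(4) continuous_on_center by (rule continuous_on_compose)
  moreover have "center \<circ> T \<in> K \<rightarrow> K" using center_T by auto
  ultimately obtain a where "(center \<circ> T) a = a"
    using brouwer[OF assms(1-3)] by blast
  then have fix_a: "center (T a) = a" by simp
  have eig: "T a $ i = (\<Sum>j\<in>UNIV. T a $ j) / CARD('n) + a$i" for i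
  proof -
    have "center (T a) $ i = a$i" by (simp only: fix_a)
    then have "T a $ i - (\<Sum>j\<in>UNIV. T a $ j) / CARD('n) = a$i"
      by (simp only: center_def vec_lambda_beta)
    then show ?thesis by linarith
  qed
  have "T a = (\<chi> i. (\<Sum>j\<in>UNIV. T a $ j) / CARD('n) + a$i)"
    unfolding vec_eq_iff vec_lambda_beta using eig by blast
  then show ?thesis by blast
qed

text \<open>The stronger
  condition on pairs is used because, unlike a bound on the gaps, it is preserved by \<open>minmax_op\<close>
  when there are at least three coordinates.\<close>
definition near_max_pairs :: "real \<Rightarrow> (real^'n::finite) set" where
  "near_max_pairs A = {x. \<forall>i j l. i \<noteq> j \<longrightarrow> 2 * x$l - A \<le> x$i + x$j}"

lemma near_max_pairs_halfspaces:
  "near_max_pairs A = (\<Inter>(i, j, l)\<in>{(i, j, l). i \<noteq> j}.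
     {x. inner (axis l 2 - axis i 1 - axis j 1) x \<le> A})"
  by (auto simp: near_max_pairs_def inner_diff_left inner_axis' algebra_simps)

lemma convex_near_max_pairs: "convex (near_max_pairs A)"
  unfolding near_max_pairs_halfspaces by (intro convex_INT) (auto intro: convex_halfspace_le)

lemma closed_near_max_pairs: "closed (near_max_pairs A)"
  unfolding near_max_pairs_halfspaces by (intro closed_INT) (auto intro: closed_halfspace_le)

lemma center_near_max_pairs:
  assumes "x \<in> near_max_pairs A"
  shows "center x \<in> near_max_pairs A"
  using assms by (simp add: near_max_pairs_def center_def)

lemma near_max_pairs_diff_le:
  assumes "0 \<le> A" "x \<in> near_max_pairs A"
  shows "x$l - x$i \<le> A"
proof (cases "i = l")
  case False
  then have "2 * x$l - A \<le> x$i + x$l" using assms(2) unfolding near_max_pairs_def by blast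
  then show ?thesis by simp
qed (use assms(1) in simp)

lemma bounded_near_max_pairs_sum_zero:
  assumes "0 \<le> A"
  shows "bounded (near_max_pairs A \<inter> {x::real^'n::finite. (\<Sum>i\<in>UNIV. x$i) = 0})"
proof -
  have "\<bar>x$i\<bar> \<le> A" if "x \<in> near_max_pairs A" "(\<Sum>i\<in>UNIV. x$i) = 0" for x :: "real^'n" and i
  proof -
    have "CARD('n) * x$i = (\<Sum>l\<in>UNIV. x$i - x$l)" using that(2) by (simp add: sum_subtractf)
    moreover have "\<bar>x$i - x$l\<bar> \<le> A" for l
      using near_max_pairs_diff_le[OF assms that(1)] by (simp add: abs_le_iff)
    then have "\<bar>\<Sum>l\<in>UNIV. x$i - x$l\<bar> \<le> CARD('n) * A"
      using order_trans[OF sum_abs sum_mono[of UNIV "\<lambda>l. \<bar>x$i - x$l\<bar>" "\<lambda>_. A"]] by simp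
    ultimately have "CARD('n) * \<bar>x$i\<bar> \<le> CARD('n) * A"
      by (metis abs_mult abs_of_nat)
    then show ?thesis by (simp add: mult_le_cancel_left_pos)
  qed
  then have "norm x \<le> CARD('n) * A" if "x \<in> near_max_pairs A" "(\<Sum>i\<in>UNIV. x$i) = 0" for x :: "real^'n"
    using that norm_le_l1_cart[of x] sum_mono[of UNIV "\<lambda>i. \<bar>x$i\<bar>" "\<lambda>_. A"] by force
  then show ?thesis unfolding bounded_iff by blast
qed

lemma minmax_op_close_to_Max_others:
  fixes V :: "real^'p::finite^'n::finite"
  assumes n2: "CARD('n) \<ge> 2" and W: "\<And>i k. \<bar>V$i$k\<bar> \<le> W"
  shows "\<bar>minmax_op V x $ i - Max ((\<lambda>j. x$j) ` {j. j \<noteq> i})\<bar> \<le> 2 * W"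
proof -
  define M where "M = Max ((\<lambda>j. x$j) ` {j. j \<noteq> i})"
  have Max_close: "\<bar>Max ((\<lambda>j. V$j$k + x$j) ` {j. j \<noteq> i}) - M\<bar> \<le> W" for k
    unfolding M_def using W by (intro abs_Max_image_diff_le others_nonempty[OF n2]) auto
  have close: "\<bar>(- V$i$k + Max ((\<lambda>j. V$j$k + x$j) ` {j. j \<noteq> i})) - M\<bar> \<le> 2 * W" for k
    using Max_close[of k] W[of i k] unfolding abs_le_iff by linarith
  have "minmax_op V x $ i \<in> (\<lambda>k. - V$i$k + Max ((\<lambda>j. V$j$k + x$j) ` {j. j \<noteq> i})) ` UNIV"
    unfolding minmax_op_def vec_lambda_beta by (intro Min_in) auto
  then show ?thesis using close unfolding M_def by auto
qed

lemma minmax_op_near_max_pairs: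
  fixes V :: "real^'p::finite^'n::finite"
  assumes n3: "CARD('n) \<ge> 3" and W: "\<And>i k. \<bar>V$i$k\<bar> \<le> W"
    and x: "x \<in> near_max_pairs (16 * W)"
  shows "minmax_op V x \<in> near_max_pairs (16 * W)"
proof -
  have n2: "CARD('n) \<ge> 2" using n3 by simp
  define M where "M i = Max ((\<lambda>j. x$j) ` {j. j \<noteq> i})" for i
  define xmax where "xmax = Max (range (\<lambda>j. x$j))"
  have "xmax \<in> range (\<lambda>j. x$j)" unfolding xmax_def by (intro Max_in) auto
  then obtain m where m: "x$m = xmax" by auto
  have le_M: "x$j \<le> M i" if "j \<noteq> i" for i j
    unfolding M_def using that by (intro Max_ge) auto
  have M_le_xmax: "M i \<le> xmax" for i
    unfolding M_def xmax_def using others_nonempty[OF n2, of i] by (intro Max_mono) auto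
  have M_near_xmax: "xmax - 8 * W \<le> M i" for i
  proof -
    obtain s t where "s \<noteq> t" "s \<noteq> i" "t \<noteq> i" using exists_two_others[OF n3] .
    then have "2 * x$m - 16 * W \<le> x$s + x$t" "x$s \<le> M i" "x$t \<le> M i"
      using x le_M unfolding near_max_pairs_def by auto
    then show ?thesis using m by linarith
  qed
  have M_pair: "2 * xmax - 8 * W \<le> M i + M j" if "i \<noteq> j" for i j
  proof (cases "m = i")
    case True
    then have "x$m \<le> M j" using that by (intro le_M) simp
    then show ?thesis using M_near_xmax[of i] m by linarith
  next
    case False
    then have "x$m \<le> M i" by (rule le_M)
    then show ?thesis using M_near_xmax[of j] m by linarith
  qed
  have T_close: "\<bar>minmax_op V x $ i - M i\<bar> \<le> 2 * W" for i
    unfolding M_def by (rule minmax_op_close_to_Max_others[OF n2 W])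
  show ?thesis
    unfolding near_max_pairs_def
  proof (intro CollectI allI impI)
    fix i j l :: 'n assume "i \<noteq> j"
    then show "2 * minmax_op V x $ l - 16 * W \<le> minmax_op V x $ i + minmax_op V x $ j"
      using M_pair[of i j] T_close[of i] T_close[of j] T_close[of l] M_le_xmax[of l]
      unfolding abs_le_iff by linarith
  qed
qed

lemma continuous_on_minmax_op:
  fixes V :: "real^'p::finite^'n::finite"
  assumes n2: "CARD('n) \<ge> 2"
  shows "continuous_on S (minmax_op V)"
  unfolding minmax_op_def
  by (intro continuous_on_vec_lambda continuous_on_Min_image continuous_on_Max_image
      continuous_intros others_nonempty[OF n2]) auto

lemma minmax_op_eigenvector_card3:
  fixes V :: "real^'p::finite^'n::finite"
  assumes n3: "CARD('n) \<ge> 3"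
  shows "\<exists>a l. minmax_op V a = (\<chi> i. l + a$i)"
proof -
  define A where "A = 16 * norm V"
  have W: "\<bar>V$i$k\<bar> \<le> norm V" for i k
    using component_le_norm_cart[of "V$i" k] Finite_Cartesian_Product.norm_nth_le[where x = V and i = i]
    by linarith
  define K where "K = near_max_pairs A \<inter> {x::real^'n. (\<Sum>i\<in>UNIV. x$i) = 0}"
  have "compact K"
    unfolding K_def compact_eq_bounded_closed A_def
    by (intro conjI bounded_near_max_pairs_sum_zero closed_Int closed_near_max_pairs
        closed_Collect_eq continuous_intros) auto
  moreover have "convex K"
  proof -
    have "{x::real^'n. (\<Sum>i\<in>UNIV. x$i) = 0} = {x. inner (\<chi> i. 1) x = 0}"
      by (simp add: inner_vec_def)
    then show ?thesis
      unfolding K_def by (metis convex_Int convex_near_max_pairs convex_hyperplane)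
  qed
  moreover have "0 \<in> K"
    unfolding K_def A_def near_max_pairs_def by simp
  moreover have "center (minmax_op V x) \<in> K" if "x \<in> K" for x
    using that minmax_op_near_max_pairs[OF n3 W] sum_center
    unfolding K_def A_def by (auto intro: center_near_max_pairs)
  moreover have "continuous_on K (minmax_op V)"
    using n3 by (intro continuous_on_minmax_op) simp
  ultimately show ?thesis by (intro eigenvector_if_center_invariant[of K]) auto
qed

theorem proposition4p9:
  fixes V :: "real^'p::finite^'n::finite"
  assumes "CARD('n) \<ge> 2"
  shows "\<exists>(a::real^'n) (l::real). minmax_op V a = (\<chi> i. l + a$i) \<and> ereal l = spectral_rho V"
proof -
  obtain a l where eig: "minmax_op V a = (\<chi> i. l + a$i)"
  proof (cases "CARD('n) = 2")
    case True
    then show ?thesis using minmax_op_eigenvector_card2 that by blast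
  next
    case False
    then have "CARD('n) \<ge> 3" using assms by simp
    then show ?thesis using minmax_op_eigenvector_card3 that by blast
  qed
  then show ?thesis using spectral_rho_eq_eigenvalue[OF assms eig] by auto
qed

end
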